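(* Let $\kappa\ge3$. For any GTR parameters $\boldsymbol\pi,Q$ and any matrix $U$ diagonalizing $Q$ as in the context, there exist indices $i,j,k\in\{2,\dots,\kappa\}$ with $\nu_{ijk}\neq0$.
   Context: $\boldsymbol\pi=(\pi_1,\dots,\pi_\kappa)$ with $\pi_i>0$ and $\sum\pi_i=1$; $Q$ a $\kappa\times\kappa$ matrix with positive off-diagonal entries, zero row sums and $\operatorname{diag}(\boldsymbol\pi)Q$ symmetric. $U$ is a real matrix with $Q=U\operatorname{diag}(0,\lambda_2,\dots,\lambda_\kappa)U^{-1}$, $0>\lambda_2\ge\dots\ge\lambda_\kappa$, $UU^T=\operatorname{diag}(\boldsymbol\pi)^{-1}$ (equivalently $U^T\operatorname{diag}(\boldsymbol\pi)U=I$), and first column $\mathbf 1$. $\nu_{ijk}=\sum_l\pi_lU_{li}U_{lj}U_{lk}$. *)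

theory Defs
  imports "Jordan_Normal_Form.Matrix"
begin

(* Indices are 0-based: the paper's index l \<in> {1..\<kappa>} is l-1 \<in> {0..<\<kappa>}. *)
definition nu :: "nat \<Rightarrow> (nat \<Rightarrow> real) \<Rightarrow> real mat \<Rightarrow> nat \<Rightarrow> nat \<Rightarrow> nat \<Rightarrow> real" where
  "nu \<kappa> p U i j k = (\<Sum>l<\<kappa>. p l * U $$ (l,i) * U $$ (l,j) * U $$ (l,k))"

end

theory Submission
  imports Defs "Jordan_Normal_Form.Determinant"
begin

(* Write u_k for the k-th column of U and <f,g> = \<Sum>_l p_l f_l g_l for the
   p-weighted inner product on functions of the rows.  The condition U U^T = diag(1/p)
   says that U^T diag(p) is a right inverse of the square matrix U, hence also a left
   inverse: the columns u_0, ..., u_{\<kappa>-1} form a <_,_>-orthonormal basis, and every w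
   expands as w = \<Sum>_k <w,u_k> u_k.
   Suppose all \<nu>_ijk with i,j,k \<ge> 1 vanish.  Since \<nu>_ijk = <u_i u_j, u_k> and u_0 = 1,
   the expansion of the pointwise product u_i u_j (i,j \<ge> 1) has the single coefficient
   <u_i u_j, u_0> = <u_i, u_j> = \<delta>_ij, so u_i u_j = \<delta>_ij pointwise.  For \<kappa> \<ge> 3 the
   columns u_1, u_2 then satisfy u_1^2 = u_2^2 = 1 and u_1 u_2 = 0 in any row, which is
   impossible.  Only the normalisation U U^T = diag(1/p) with p > 0 and u_0 = 1 is
   needed. *)

definition wdot :: "nat \<Rightarrow> (nat \<Rightarrow> real) \<Rightarrow> (nat \<Rightarrow> real) \<Rightarrow> (nat \<Rightarrow> real) \<Rightarrow> real" where
  "wdot \<kappa> p f g = (\<Sum>l<\<kappa>. p l * f l * g l)"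

lemma nu_as_wdot: "nu \<kappa> p U i j k = wdot \<kappa> p (\<lambda>l. U $$ (l,i) * U $$ (l,j)) (\<lambda>l. U $$ (l,k))"
  unfolding nu_def wdot_def by (simp add: mult.assoc)

(* Under U U^T = diag(1/p), the matrix U^T diag(p) is a two-sided inverse of U; the left
   inverse property comes from the library fact that one-sided inverses of square
   matrices are two-sided. *)
lemma weighted_inverse:
  fixes U :: "real mat"
  assumes U: "U \<in> carrier_mat \<kappa> \<kappa>" and p: "\<forall>i<\<kappa>. p i \<noteq> 0"
    and UUT: "U * transpose_mat U = mat_diag \<kappa> (\<lambda>i. 1 / p i)"
  shows "U * (transpose_mat U * mat_diag \<kappa> p) = 1\<^sub>m \<kappa>"
    and "(transpose_mat U * mat_diag \<kappa> p) * U = 1\<^sub>m \<kappa>"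
proof -
  have D: "mat_diag \<kappa> (\<lambda>i. 1 / p i) * mat_diag \<kappa> p = 1\<^sub>m \<kappa>"
    using p unfolding mat_diag_diag by (auto intro!: eq_matI simp: mat_diag_def)
  have "U * (transpose_mat U * mat_diag \<kappa> p) = (U * transpose_mat U) * mat_diag \<kappa> p"
    using U by (simp add: assoc_mult_mat[of _ \<kappa> \<kappa> _ \<kappa> _ \<kappa>])
  also have "\<dots> = 1\<^sub>m \<kappa>" using UUT D by simp
  finally show right: "U * (transpose_mat U * mat_diag \<kappa> p) = 1\<^sub>m \<kappa>" .
  show "(transpose_mat U * mat_diag \<kappa> p) * U = 1\<^sub>m \<kappa>"
    by (rule mat_mult_left_right_inverse[OF U _ right]) (use U in auto)
qed

lemma transpose_diag_entry:
  fixes U :: "real mat"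
  assumes "U \<in> carrier_mat \<kappa> \<kappa>" and "i < \<kappa>" and "j < \<kappa>"
  shows "(transpose_mat U * mat_diag \<kappa> p) $$ (i,j) = U $$ (j,i) * p j"
  using assms by (subst mat_diag_mult_right[of _ \<kappa>]) auto

lemma mult_mat_entry:
  fixes A B :: "'a::comm_semiring_0 mat"
  assumes "A \<in> carrier_mat n n" and "B \<in> carrier_mat n n" and "i < n" and "j < n"
  shows "(A * B) $$ (i,j) = (\<Sum>l<n. A $$ (i,l) * B $$ (l,j))"
  using assms by (simp add: scalar_prod_def lessThan_atLeast0)

lemma weighted_orthonormal:
  fixes U :: "real mat"
  assumes U: "U \<in> carrier_mat \<kappa> \<kappa>" and p: "\<forall>i<\<kappa>. p i \<noteq> 0"
    and UUT: "U * transpose_mat U = mat_diag \<kappa> (\<lambda>i. 1 / p i)"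
    and ij: "i < \<kappa>" "j < \<kappa>"
  shows "wdot \<kappa> p (\<lambda>l. U $$ (l,i)) (\<lambda>l. U $$ (l,j)) = (if i = j then 1 else 0)"
proof -
  let ?W = "transpose_mat U * mat_diag \<kappa> p"
  have "wdot \<kappa> p (\<lambda>l. U $$ (l,i)) (\<lambda>l. U $$ (l,j)) = (\<Sum>l<\<kappa>. ?W $$ (i,l) * U $$ (l,j))"
    unfolding wdot_def using U ij by (intro sum.cong) (auto simp: transpose_diag_entry)
  also have "\<dots> = (?W * U) $$ (i,j)"
    using U ij by (intro mult_mat_entry[symmetric]) auto
  also have "\<dots> = (if i = j then 1 else 0)"
    using weighted_inverse(2)[OF U p UUT] ij by simp
  finally show ?thesis .
qed

lemma weighted_expansion:
  fixes U :: "real mat" and w :: "nat \<Rightarrow> real"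
  assumes U: "U \<in> carrier_mat \<kappa> \<kappa>" and p: "\<forall>i<\<kappa>. p i \<noteq> 0"
    and UUT: "U * transpose_mat U = mat_diag \<kappa> (\<lambda>i. 1 / p i)"
    and l: "l < \<kappa>"
  shows "w l = (\<Sum>k<\<kappa>. U $$ (l,k) * wdot \<kappa> p w (\<lambda>m. U $$ (m,k)))"
proof -
  let ?W = "transpose_mat U * mat_diag \<kappa> p"
  have "(\<Sum>m<\<kappa>. (U * ?W) $$ (l,m) * w m) = (\<Sum>m<\<kappa>. if l = m then w m else 0)"
    using weighted_inverse(1)[OF U p UUT] l by (intro sum.cong) auto
  hence "w l = (\<Sum>m<\<kappa>. (U * ?W) $$ (l,m) * w m)"
    using l by (simp add: sum.delta)
  also have "\<dots> = (\<Sum>m<\<kappa>. \<Sum>k<\<kappa>. U $$ (l,k) * (U $$ (m,k) * p m) * w m)"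
  proof (intro sum.cong refl)
    fix m assume m: "m \<in> {..<\<kappa>}"
    have "(U * ?W) $$ (l,m) = (\<Sum>k<\<kappa>. U $$ (l,k) * ?W $$ (k,m))"
      using U l m by (intro mult_mat_entry) auto
    also have "\<dots> = (\<Sum>k<\<kappa>. U $$ (l,k) * (U $$ (m,k) * p m))"
      using U m by (intro sum.cong) (auto simp: transpose_diag_entry)
    finally show "(U * ?W) $$ (l,m) * w m = (\<Sum>k<\<kappa>. U $$ (l,k) * (U $$ (m,k) * p m) * w m)"
      by (simp add: sum_distrib_right)
  qed
  also have "\<dots> = (\<Sum>k<\<kappa>. U $$ (l,k) * wdot \<kappa> p w (\<lambda>m. U $$ (m,k)))"
    unfolding wdot_def by (subst sum.swap) (simp add: sum_distrib_left algebra_simps)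
  finally show ?thesis .
qed

lemma column_product_constant:
  fixes U :: "real mat"
  assumes U: "U \<in> carrier_mat \<kappa> \<kappa>" and p: "\<forall>i<\<kappa>. p i \<noteq> 0"
    and UUT: "U * transpose_mat U = mat_diag \<kappa> (\<lambda>i. 1 / p i)"
    and col0: "\<forall>l<\<kappa>. U $$ (l,0) = 1"
    and ij: "i < \<kappa>" "j < \<kappa>"
    and nu0: "\<forall>k\<in>{1..<\<kappa>}. nu \<kappa> p U i j k = 0"
    and l: "l < \<kappa>"
  shows "U $$ (l,i) * U $$ (l,j) = (if i = j then 1 else 0)"
proof -
  let ?c = "\<lambda>k. wdot \<kappa> p (\<lambda>m. U $$ (m,i) * U $$ (m,j)) (\<lambda>m. U $$ (m,k))"
  have "?c 0 = wdot \<kappa> p (\<lambda>m. U $$ (m,i)) (\<lambda>m. U $$ (m,j))"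
    using col0 unfolding wdot_def by (intro sum.cong) auto
  hence c0: "?c 0 = (if i = j then 1 else 0)"
    using weighted_orthonormal[OF U p UUT ij] by simp
  have ck: "U $$ (l,k) * ?c k = (if k = 0 then ?c 0 else 0)" if "k < \<kappa>" for k
    using nu0 that col0 l by (auto simp: nu_as_wdot)
  have "U $$ (l,i) * U $$ (l,j) = (\<Sum>k<\<kappa>. U $$ (l,k) * ?c k)"
    by (rule weighted_expansion[OF U p UUT l])
  also have "\<dots> = ?c 0"
    using ck l by (simp add: sum.delta)
  finally show ?thesis using c0 by simp
qed

theorem proposition2:
  fixes \<kappa> :: nat and p lam :: "nat \<Rightarrow> real" and Q U :: "real mat"
  assumes "\<kappa> \<ge> 3"
    and "\<forall>i<\<kappa>. p i > 0" and "(\<Sum>i<\<kappa>. p i) = 1"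
    and "Q \<in> carrier_mat \<kappa> \<kappa>"
    and "\<forall>i<\<kappa>. \<forall>j<\<kappa>. i \<noteq> j \<longrightarrow> Q $$ (i,j) > 0"
    and "\<forall>i<\<kappa>. (\<Sum>j<\<kappa>. Q $$ (i,j)) = 0"
    and "mat_diag \<kappa> p * Q = transpose_mat (mat_diag \<kappa> p * Q)"
    and "U \<in> carrier_mat \<kappa> \<kappa>"
    and "\<exists>V \<in> carrier_mat \<kappa> \<kappa>. inverts_mat U V \<and> inverts_mat V U \<and>
           Q = U * mat_diag \<kappa> (\<lambda>i. if i = 0 then 0 else lam i) * V"
    and "lam 1 < 0"
    and "\<forall>i j. 1 \<le> i \<longrightarrow> i \<le> j \<longrightarrow> j < \<kappa> \<longrightarrow> lam j \<le> lam i"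
    and "U * transpose_mat U = mat_diag \<kappa> (\<lambda>i. 1 / p i)"
    and "\<forall>l<\<kappa>. U $$ (l,0) = 1"
  shows "\<exists>i\<in>{1..<\<kappa>}. \<exists>j\<in>{1..<\<kappa>}. \<exists>k\<in>{1..<\<kappa>}. nu \<kappa> p U i j k \<noteq> 0"
proof (rule ccontr)
  assume "\<not> ?thesis"
  hence nu0: "\<forall>k\<in>{1..<\<kappa>}. nu \<kappa> p U i j k = 0" if "i \<in> {1..<\<kappa>}" "j \<in> {1..<\<kappa>}" for i j
    using that by blast
  have p: "\<forall>i<\<kappa>. p i \<noteq> 0" using assms(2) by auto
  have \<kappa>: "0 < \<kappa>" "1 < \<kappa>" "2 < \<kappa>" using assms(1) by auto
  note products = column_product_constant[OF assms(8) p assms(12) assms(13) _ _ nu0 \<kappa>(1)]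
  have "U $$ (0,1) * U $$ (0,1) = 1" and "U $$ (0,2) * U $$ (0,2) = 1"
    and "U $$ (0,1) * U $$ (0,2) = 0"
    using products[of 1 1] products[of 2 2] products[of 1 2] \<kappa> by auto
  then show False by (metis mult.left_commute mult.right_neutral mult_zero_right zero_neq_one)
qed

end
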